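(* Let $\boldsymbol{\mathcal{A}}\in\mathbb{C}^{N\times N\times M\times M}$ and $\mathbf{v},\mathbf{w}\in\mathbb{C}^N$ with $\mathbf{w}^H\mathbf{v}=1$, and run the tensor non-Hermitian Lanczos process (described in the context) with arbitrary nonsingular choices $\boldsymbol{\gamma}_2,\boldsymbol{\gamma}_3,\dots$. Let $n\ge1$ and suppose $\boldsymbol{\beta}_2,\dots,\boldsymbol{\beta}_n$ are all nonsingular, so that $V_1,\dots,V_n$, $W_1^D,\dots,W_n^D$ and $\boldsymbol{\alpha}_1,\dots,\boldsymbol{\alpha}_n$ are defined. Then: (a) $W_k^D*V_j=\delta_{kj}I_M$ for all $1\le j,k\le n$, i.e. $\boldsymbol{\mathcal{W}}_n*\boldsymbol{\mathcal{V}}_n=\boldsymbol{\mathcal{I}}_*\in\mathbb{C}^{n\times n\times M\times M}$; (b) $\langle V_1,\dots,V_n\rangle=\mathcal{K}_n(\boldsymbol{\mathcal{A}},V)$ and $\langle W_1^D,\dots,W_n^D\rangle=\mathcal{K}_n^D(W^D,\boldsymbol{\mathcal{A}})$; (c) $\boldsymbol{\mathcal{T}}_n=\boldsymbol{\mathcal{W}}_n*\boldsymbol{\mathcal{A}}*\boldsymbol{\mathcal{V}}_n$.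
   Context: Slicing and products: for a 4-mode tensor, $\boldsymbol{\mathcal{A}}_{i_1,i_2,:,:}$ denotes the $M\times M$ matrix slice; for a 3-mode tensor, $A_{i,:,:}$ likewise. $*$-tensor product: $(\boldsymbol{\mathcal{A}}*\boldsymbol{\mathcal{B}})_{i_1,i_2,:,:}=\sum_k\boldsymbol{\mathcal{A}}_{i_1,k,:,:}\boldsymbol{\mathcal{B}}_{k,i_2,:,:}$. Tensor-hypervector product: $(\boldsymbol{\mathcal{A}}*A)_{i,:,:}=\sum_k\boldsymbol{\mathcal{A}}_{i,k,:,:}A_{k,:,:}$; left action of a 3-mode tensor $B^D$ (superscript $D$ marks tensors acting from the left): $(B^D*\boldsymbol{\mathcal{A}})^D_{i,:,:}=\sum_k B^D_{k,:,:}\boldsymbol{\mathcal{A}}_{k,i,:,:}$; hypervector inner product $B^D*A=\sum_kB^D_{k,:,:}A_{k,:,:}\in\mathbb{C}^{M\times M}$. These products are associative. For $\boldsymbol{\alpha}\in\mathbb{C}^{M\times M}$ and a 3-mode tensor $A$: $(A\times\boldsymbol{\alpha})_{i,:,:}=A_{i,:,:}\boldsymbol{\alpha}$, $(\boldsymbol{\alpha}\times A)_{i,:,:}=\boldsymbol{\alpha}A_{i,:,:}$; analogously for 4-mode tensors, $(\boldsymbol{\mathcal{A}}\times\boldsymbol{\alpha})_{i_1,i_2,:,:}=\boldsymbol{\mathcal{A}}_{i_1,i_2,:,:}\boldsymbol{\alpha}$ and $(\boldsymbol{\alpha}\times\boldsymbol{\mathcal{A}})_{i_1,i_2,:,:}=\boldsymbol{\alpha}\boldsymbol{\mathcal{A}}_{i_1,i_2,:,:}$.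 For $\mathbf{a}\in\mathbb{C}^N$, $\mathbf{a}\otimes I_M\in\mathbb{C}^{N\times M\times M}$ has slices $(\mathbf{a}\otimes I_M)_{i,:,:}=\mathbf{a}_iI_M$. The $*$-identity $\boldsymbol{\mathcal{I}}_*\in\mathbb{C}^{n\times n\times M\times M}$ has slices $I_M$ for $i_1=i_2$ and $0$ otherwise; $\boldsymbol{\mathcal{A}}^{0_*}=\boldsymbol{\mathcal{I}}_*$ and $\boldsymbol{\mathcal{A}}^{k_*}$ is the $k$-fold $*$-product of $\boldsymbol{\mathcal{A}}$ with itself. Krylov-type subspaces: for $A,B^D\in\mathbb{C}^{N\times M\times M}$, $\mathcal{K}_n(\boldsymbol{\mathcal{A}},A)=\{\sum_{k=0}^{n-1}(\boldsymbol{\mathcal{A}}^{k_*}\times\boldsymbol{\eta}_k)*A:\boldsymbol{\eta}_k\in\mathbb{C}^{M\times M}\}$ and $\mathcal{K}_n^D(B^D,\boldsymbol{\mathcal{A}})=\{B^D*\sum_{k=0}^{n-1}(\boldsymbol{\eta}_k^H\times\boldsymbol{\mathcal{A}}^{k_*}):\boldsymbol{\eta}_k\in\mathbb{C}^{M\times M}\}$. For $V_1,\dots,V_n\in\mathbb{C}^{N\times M\times M}$, $\langle V_1,\dots,V_n\rangle=\{\sum_kV_k\times\boldsymbol{\eta}_k:\boldsymbol{\eta}_k\in\mathbb{C}^{M\times M}\}$, and for $W_1^D,\dots,W_n^D$, $\langle W_1^D,\dots,W_n^D\rangle=\{\sum_k\boldsymbol{\eta}_k\times W_k^D:\boldsymbol{\eta}_k\in\mathbb{C}^{M\times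 M}\}$. Tensor non-Hermitian Lanczos process: set $V=\mathbf{v}\otimes I_M$, $W^D=\overline{\mathbf{w}}\otimes I_M$, $V_0=W_0^D=0$, $\boldsymbol{\beta}_1=0$, $V_1=V$, $W_1^D=W^D$. For $k=1,2,\dots$: $\boldsymbol{\alpha}_k=W_k^D*\boldsymbol{\mathcal{A}}*V_k$; $\widehat W_{k+1}^D=W_k^D*\boldsymbol{\mathcal{A}}-\boldsymbol{\alpha}_k\times W_k^D-\boldsymbol{\beta}_k\times W_{k-1}^D$; $\widehat V_{k+1}=\boldsymbol{\mathcal{A}}*V_k-V_k\times\boldsymbol{\alpha}_k-V_{k-1}\times\boldsymbol{\gamma}_k$ (the term with $\boldsymbol{\gamma}_1$ vanishes since $V_0=0$); choose a nonsingular $\boldsymbol{\gamma}_{k+1}\in\mathbb{C}^{M\times M}$; $\boldsymbol{\beta}_{k+1}=\boldsymbol{\gamma}_{k+1}^{-1}(\widehat W_{k+1}^D*\widehat V_{k+1})$; if $\boldsymbol{\beta}_{k+1}$ is singular the process stops, otherwise $V_{k+1}=\widehat V_{k+1}\times\boldsymbol{\beta}_{k+1}^{-1}$ and $W_{k+1}^D=\boldsymbol{\gamma}_{k+1}^{-1}\times\widehat W_{k+1}^D$. Basis tensors: $\boldsymbol{\mathcal{V}}_n\in\mathbb{C}^{N\times n\times M\times M}$ with $(\boldsymbol{\mathcal{V}}_n)_{:,k,:,:}=V_k$ and $\boldsymbol{\mathcal{W}}_n\in\mathbb{C}^{n\times N\times M\times M}$ with $(\boldsymbol{\mathcal{W}}_n)_{k,:,:,:}=W_k^D$,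 $k=1,\dots,n$. Tridiagonal tensor $\boldsymbol{\mathcal{T}}_n\in\mathbb{C}^{n\times n\times M\times M}$: $(\boldsymbol{\mathcal{T}}_n)_{i,i,:,:}=\boldsymbol{\alpha}_i$ ($1\le i\le n$), $(\boldsymbol{\mathcal{T}}_n)_{i,i+1,:,:}=\boldsymbol{\gamma}_{i+1}$ ($1\le i\le n-1$), $(\boldsymbol{\mathcal{T}}_n)_{i,i-1,:,:}=\boldsymbol{\beta}_i$ ($2\le i\le n$), all other slices zero. *)

theory Defs
  imports "HOL-Analysis.Analysis"
begin

text \<open>M x M complex matrices are modelled as complex^'m^'m ('m a finite index type of size M).
  A 3-mode tensor in C^(N x M x M) is a function 'N => complex^'m^'m, a 4-mode tensor
  in C^(P x Q x M x M) is a function 'p => 'q => complex^'m^'m.  The N-dimensional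
  modes are indexed by a finite type 'N; the Lanczos-step modes (of size n) are indexed
  by naturals 1..n.\<close>

type_synonym 'm sqm = "complex^'m^'m"

definition mH :: "('m::finite) sqm \<Rightarrow> ('m::finite) sqm" where
  "mH X = (\<chi> i j. cnj (X $ j $ i))"

definition tmul :: "('a \<Rightarrow> 'b::finite \<Rightarrow> ('m::finite) sqm) \<Rightarrow> ('b \<Rightarrow> 'c \<Rightarrow> ('m::finite) sqm) \<Rightarrow> ('a \<Rightarrow> 'c \<Rightarrow> ('m::finite) sqm)" where
  "tmul A B = (\<lambda>i1 i2. \<Sum>k\<in>UNIV. A i1 k ** B k i2)"

definition tvec :: "('a \<Rightarrow> 'b::finite \<Rightarrow> ('m::finite) sqm) \<Rightarrow> ('b \<Rightarrow> ('m::finite) sqm) \<Rightarrow> ('a \<Rightarrow> ('m::finite) sqm)" where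
  "tvec A X = (\<lambda>i. \<Sum>k\<in>UNIV. A i k ** X k)"

definition dvec :: "('b::finite \<Rightarrow> ('m::finite) sqm) \<Rightarrow> ('b \<Rightarrow> 'a \<Rightarrow> ('m::finite) sqm) \<Rightarrow> ('a \<Rightarrow> ('m::finite) sqm)" where
  "dvec B A = (\<lambda>i. \<Sum>k\<in>UNIV. B k ** A k i)"

definition hinner :: "('b::finite \<Rightarrow> ('m::finite) sqm) \<Rightarrow> ('b \<Rightarrow> ('m::finite) sqm) \<Rightarrow> ('m::finite) sqm" where
  "hinner B X = (\<Sum>k\<in>UNIV. B k ** X k)"

definition tid :: "'a \<Rightarrow> 'a \<Rightarrow> ('m::finite) sqm" where
  "tid = (\<lambda>i1 i2. if i1 = i2 then mat 1 else 0)"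

definition tpow :: "('a::finite \<Rightarrow> 'a \<Rightarrow> ('m::finite) sqm) \<Rightarrow> nat \<Rightarrow> ('a \<Rightarrow> 'a \<Rightarrow> ('m::finite) sqm)" where
  "tpow A k = ((\<lambda>B. tmul A B) ^^ k) tid"

text \<open>a (x) I_M, and conj(a) (x) I_M.\<close>
definition kronI :: "complex^'n \<Rightarrow> ('n \<Rightarrow> ('m::finite) sqm)" where
  "kronI a = (\<lambda>i. mat (a $ i))"

definition krylov :: "('a::finite \<Rightarrow> 'a \<Rightarrow> ('m::finite) sqm) \<Rightarrow> ('a \<Rightarrow> ('m::finite) sqm) \<Rightarrow> nat \<Rightarrow> ('a \<Rightarrow> ('m::finite) sqm) set" where
  "krylov A X n = {(\<lambda>i. \<Sum>k<n. tvec (\<lambda>i1 i2. tpow A k i1 i2 ** \<eta> k) X i) | \<eta>. True}"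

definition krylovD :: "('a::finite \<Rightarrow> ('m::finite) sqm) \<Rightarrow> ('a \<Rightarrow> 'a \<Rightarrow> ('m::finite) sqm) \<Rightarrow> nat \<Rightarrow> ('a \<Rightarrow> ('m::finite) sqm) set" where
  "krylovD B A n = {dvec B (\<lambda>i1 i2. \<Sum>k<n. mH (\<eta> k) ** tpow A k i1 i2) | \<eta>. True}"

definition spanR :: "(nat \<Rightarrow> 'a \<Rightarrow> ('m::finite) sqm) \<Rightarrow> nat \<Rightarrow> ('a \<Rightarrow> ('m::finite) sqm) set" where
  "spanR V n = {(\<lambda>i. \<Sum>k\<in>{1..n}. V k i ** \<eta> k) | \<eta>. True}"

definition spanL :: "(nat \<Rightarrow> 'a \<Rightarrow> ('m::finite) sqm) \<Rightarrow> nat \<Rightarrow> ('a \<Rightarrow> ('m::finite) sqm) set" where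
  "spanL W n = {(\<lambda>i. \<Sum>k\<in>{1..n}. \<eta> k ** W k i) | \<eta>. True}"

text \<open>Tensor non-Hermitian Lanczos process.  lanczos_state A v w \<gamma> m is the state at
  step k = m+1, i.e. the tuple (V_{k-1}, V_k, W_{k-1}^D, W_k^D, beta_k).
  The process is continued with matrix_inv even if some beta is singular; the theorem
  only speaks about the steps before any singular beta occurs.\<close>
fun lanczos_state ::
  "('a::finite \<Rightarrow> 'a \<Rightarrow> ('m::finite) sqm) \<Rightarrow> complex^'a \<Rightarrow> complex^'a \<Rightarrow> (nat \<Rightarrow> ('m::finite) sqm) \<Rightarrow> nat \<Rightarrow>
     ('a \<Rightarrow> ('m::finite) sqm) \<times> ('a \<Rightarrow> ('m::finite) sqm) \<times> ('a \<Rightarrow> ('m::finite) sqm) \<times> ('a \<Rightarrow> ('m::finite) sqm) \<times> ('m::finite) sqm" where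
  "lanczos_state A v w \<gamma> 0 = ((\<lambda>_. 0), kronI v, (\<lambda>_. 0), kronI (\<chi> i. cnj (w $ i)), 0)"
| "lanczos_state A v w \<gamma> (Suc m) =
     (case lanczos_state A v w \<gamma> m of (Vp, Vc, Wp, Wc, b) \<Rightarrow>
       (let k = Suc m;
            a = hinner Wc (tvec A Vc);
            hW = (\<lambda>i. dvec Wc A i - a ** Wc i - b ** Wp i);
            hV = (\<lambda>i. tvec A Vc i - Vc i ** a - Vp i ** \<gamma> k);
            b' = matrix_inv (\<gamma> (Suc k)) ** hinner hW hV
        in (Vc, (\<lambda>i. hV i ** matrix_inv b'), Wc, (\<lambda>i. matrix_inv (\<gamma> (Suc k)) ** hW i), b')))"

definition lzV where "lzV A v w \<gamma> k = fst (snd (lanczos_state A v w \<gamma> (k - 1)))"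
definition lzW where "lzW A v w \<gamma> k = fst (snd (snd (snd (lanczos_state A v w \<gamma> (k - 1)))))"
definition lzbeta where "lzbeta A v w \<gamma> k = snd (snd (snd (snd (lanczos_state A v w \<gamma> (k - 1)))))"
definition lzalpha where "lzalpha A v w \<gamma> k = hinner (lzW A v w \<gamma> k) (tvec A (lzV A v w \<gamma> k))"

definition basisV where "basisV A v w \<gamma> n = (\<lambda>i k. if k \<in> {1..n} then lzV A v w \<gamma> k i else 0)"
definition basisW where "basisW A v w \<gamma> n = (\<lambda>k i. if k \<in> {1..n} then lzW A v w \<gamma> k i else 0)"

definition triT where "triT A v w \<gamma> n = (\<lambda>i j.
   if i \<in> {1..n} \<and> j \<in> {1..n} then
     (if i = j then lzalpha A v w \<gamma> i
      else if j = i + 1 then \<gamma> (i + 1)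
      else if i = j + 1 then lzbeta A v w \<gamma> i
      else 0)
   else 0)"

end

theory Submission
  imports Defs
begin

text \<open>The Lanczos vectors obey the three-term recurrences
  \<open>A * V\<^sub>k = V\<^sub>k\<^sub>+\<^sub>1 \<beta>\<^sub>k\<^sub>+\<^sub>1 + V\<^sub>k \<alpha>\<^sub>k + V\<^sub>k\<^sub>-\<^sub>1 \<gamma>\<^sub>k\<close> and
  \<open>W\<^sub>k * A = \<gamma>\<^sub>k\<^sub>+\<^sub>1 W\<^sub>k\<^sub>+\<^sub>1 + \<alpha>\<^sub>k W\<^sub>k + \<beta>\<^sub>k W\<^sub>k\<^sub>-\<^sub>1\<close>.
  Biorthogonality is proved by induction: \<open>\<beta>\<^sub>k\<^sub>+\<^sub>1\<close> is chosen so that \<open>W\<^sub>k\<^sub>+\<^sub>1 * V\<^sub>k\<^sub>+\<^sub>1 = I\<close>,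
  \<open>\<alpha>\<^sub>k\<close> kills the pairing of the new vector with \<open>V\<^sub>k\<close> (resp. \<open>W\<^sub>k\<close>), and the pairings with older
  vectors vanish once the recurrence of the older vector is inserted. The same recurrences show
  that \<open>V\<^sub>1, \<dots>, V\<^sub>k\<close> and \<open>V, A * V, \<dots>, A\<^sup>k\<^sup>-\<^sup>1 * V\<close> generate the same module (likewise for
  \<open>W\<close>), and pairing \<open>A * V\<^sub>j\<close> with the biorthogonal \<open>W\<^sub>i\<close> reads off the tridiagonal \<open>T\<^sub>n\<close>.\<close>

lemma matrix_add_rdistrib: "((A::'a::semiring_1^'n^'m) + B) ** C = A ** C + B ** C"
  by (simp add: matrix_matrix_mult_def vec_eq_iff sum.distrib[symmetric] distrib_right)

lemma matrix_diff_ldistrib: "(C::'a::ring_1^'n^'m) ** (A - B) = C ** A - C ** B"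
  by (simp add: matrix_matrix_mult_def vec_eq_iff sum_subtractf[symmetric] right_diff_distrib)

lemma matrix_diff_rdistrib: "((A::'a::ring_1^'n^'m) - B) ** C = A ** C - B ** C"
  by (simp add: matrix_matrix_mult_def vec_eq_iff sum_subtractf[symmetric] left_diff_distrib)

lemma matrix_sum_ldistrib: "(C::'a::semiring_1^'n^'m) ** sum f S = (\<Sum>k\<in>S. C ** f k)"
  by (induction S rule: infinite_finite_induct) (auto simp: matrix_add_ldistrib)

lemma matrix_sum_rdistrib: "sum (f::_ \<Rightarrow> 'a::semiring_1^'n^'m) S ** C = (\<Sum>k\<in>S. f k ** C)"
  by (induction S rule: infinite_finite_induct) (auto simp: matrix_add_rdistrib)

lemma mat_matrix_mult: "mat c ** (X::'a::semiring_1^'n^'m) = (\<chi> i j. c * X$i$j)"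
  by (simp add: matrix_matrix_mult_def mat_def vec_eq_iff if_distrib if_distribR cong: if_cong)

lemma matrix_mult_mat: "(X::'a::semiring_1^'n^'m) ** mat c = (\<chi> i j. X$i$j * c)"
  by (simp add: matrix_matrix_mult_def mat_def vec_eq_iff if_distrib if_distribR cong: if_cong)

lemma mat_matrix_mult_commute: "mat c ** (X::'a::comm_semiring_1^'n^'n) = X ** mat c"
  by (simp add: mat_matrix_mult matrix_mult_mat mult.commute)

lemma mat_matrix_mult_left_commute:
  "mat c ** ((X::'a::comm_semiring_1^'n^'n) ** Y) = X ** (mat c ** Y)"
  by (simp only: matrix_mul_assoc mat_matrix_mult_commute)

lemma mat_mult_mat: "mat a ** mat b = (mat (a * b) :: 'a::semiring_1^'n^'n)"
  by (simp add: mat_matrix_mult) (simp add: mat_def vec_eq_iff)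

lemma sum_mat: "(\<Sum>k\<in>S. mat (f k)) = (mat (sum f S) :: 'a::semiring_1^'n^'n)"
  by (induction S rule: infinite_finite_induct) (auto simp: mat_def vec_eq_iff)

lemma matrix_inv_right: "invertible (A::'a::semiring_1^'n^'m) \<Longrightarrow> A ** matrix_inv A = mat 1"
  unfolding invertible_def matrix_inv_def by (rule someI_ex[THEN conjunct1])

lemma matrix_inv_left: "invertible (A::'a::semiring_1^'n^'m) \<Longrightarrow> matrix_inv A ** A = mat 1"
  unfolding invertible_def matrix_inv_def by (rule someI_ex[THEN conjunct2])

lemma tmul_assoc: "tmul (tmul A B) C = tmul A (tmul B C)"
  unfolding tmul_def
  by (intro ext) (simp add: matrix_sum_rdistrib matrix_sum_ldistrib matrix_mul_assoc, rule sum.swap)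

lemma tvec_tvec: "tvec A (tvec B X) = tvec (tmul A B) X"
  unfolding tmul_def tvec_def
  by (intro ext) (simp add: matrix_sum_rdistrib matrix_sum_ldistrib matrix_mul_assoc, rule sum.swap)

lemma dvec_dvec: "dvec (dvec B T) A = dvec B (tmul T A)"
  unfolding tmul_def dvec_def
  by (intro ext) (simp add: matrix_sum_rdistrib matrix_sum_ldistrib matrix_mul_assoc, rule sum.swap)

lemma hinner_dvec: "hinner (dvec W A) X = hinner W (tvec A X)"
  unfolding hinner_def dvec_def tvec_def
  by (simp add: matrix_sum_rdistrib matrix_sum_ldistrib matrix_mul_assoc, rule sum.swap)

lemma tmul_tid_left: "tmul tid A = A"
  unfolding tmul_def tid_def by (simp add: if_distrib[of "\<lambda>M. M ** _"] cong: if_cong)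

lemma tmul_tid_right: "tmul A tid = A"
  unfolding tmul_def tid_def by (simp add: if_distrib[of "\<lambda>M. _ ** M"] cong: if_cong)

lemma tvec_tid: "tvec tid X = X"
  unfolding tvec_def tid_def by (simp add: if_distrib[of "\<lambda>M. M ** _"] cong: if_cong)

lemma dvec_tid: "dvec B tid = B"
  unfolding dvec_def tid_def by (simp add: if_distrib[of "\<lambda>M. _ ** M"] cong: if_cong)

lemma tpow_0: "tpow A 0 = tid"
  by (simp add: tpow_def)

lemma tpow_Suc: "tpow A (Suc k) = tmul A (tpow A k)"
  by (simp add: tpow_def)

lemma tpow_Suc_right: "tpow A (Suc k) = tmul (tpow A k) A"
  by (induction k) (simp_all add: tpow_0 tpow_Suc tmul_tid_left tmul_tid_right, metis tmul_assoc)

lemma hinner_add_left: "hinner (\<lambda>i. W i + U i) X = hinner W X + hinner U X"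
  by (simp add: hinner_def matrix_add_rdistrib sum.distrib)

lemma hinner_diff_left: "hinner (\<lambda>i. W i - U i) X = hinner W X - hinner U X"
  by (simp add: hinner_def matrix_diff_rdistrib sum_subtractf)

lemma hinner_add_right: "hinner W (\<lambda>i. X i + Y i) = hinner W X + hinner W Y"
  by (simp add: hinner_def matrix_add_ldistrib sum.distrib)

lemma hinner_diff_right: "hinner W (\<lambda>i. X i - Y i) = hinner W X - hinner W Y"
  by (simp add: hinner_def matrix_diff_ldistrib sum_subtractf)

lemma hinner_scale_left: "hinner (\<lambda>i. c ** W i) X = c ** hinner W X"
  by (simp add: hinner_def matrix_sum_ldistrib matrix_mul_assoc)

lemma hinner_scale_right: "hinner W (\<lambda>i. X i ** c) = hinner W X ** c"
  by (simp add: hinner_def matrix_sum_rdistrib matrix_mul_assoc)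

lemma hinner_zero_left: "hinner (\<lambda>i. 0) X = 0"
  by (simp add: hinner_def)

lemma hinner_zero_right: "hinner W (\<lambda>i. 0) = 0"
  by (simp add: hinner_def)

lemma tvec_zero: "tvec A (\<lambda>i. 0) = (\<lambda>i. 0)"
  by (simp add: tvec_def)

lemma dvec_zero: "dvec (\<lambda>i. 0) A = (\<lambda>i. 0)"
  by (simp add: dvec_def)

section \<open>Spans with matrix coefficients\<close>

lemma spanR_iff: "x \<in> spanR V n \<longleftrightarrow> (\<exists>\<eta>. x = (\<lambda>i. \<Sum>k\<in>{1..n}. V k i ** \<eta> k))"
  by (auto simp: spanR_def)

lemma spanL_iff: "x \<in> spanL W n \<longleftrightarrow> (\<exists>\<eta>. x = (\<lambda>i. \<Sum>k\<in>{1..n}. \<eta> k ** W k i))"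
  by (auto simp: spanL_def)

lemma spanR_zero: "(\<lambda>i. 0) \<in> spanR V n"
  unfolding spanR_iff by (rule exI[of _ "\<lambda>k. 0"]) simp

lemma spanL_zero: "(\<lambda>i. 0) \<in> spanL W n"
  unfolding spanL_iff by (rule exI[of _ "\<lambda>k. 0"]) simp

lemma spanR_add: "x \<in> spanR V n \<Longrightarrow> y \<in> spanR V n \<Longrightarrow> (\<lambda>i. x i + y i) \<in> spanR V n"
  unfolding spanR_iff
  by (elim exE, rule exI[of _ "\<lambda>k. _ k + _ k"]) (simp add: matrix_add_ldistrib sum.distrib)

lemma spanL_add: "x \<in> spanL W n \<Longrightarrow> y \<in> spanL W n \<Longrightarrow> (\<lambda>i. x i + y i) \<in> spanL W n"
  unfolding spanL_iff
  by (elim exE, rule exI[of _ "\<lambda>k. _ k + _ k"]) (simp add: matrix_add_rdistrib sum.distrib)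

lemma spanR_diff: "x \<in> spanR V n \<Longrightarrow> y \<in> spanR V n \<Longrightarrow> (\<lambda>i. x i - y i) \<in> spanR V n"
  unfolding spanR_iff
  by (elim exE, rule exI[of _ "\<lambda>k. _ k - _ k"]) (simp add: matrix_diff_ldistrib sum_subtractf)

lemma spanL_diff: "x \<in> spanL W n \<Longrightarrow> y \<in> spanL W n \<Longrightarrow> (\<lambda>i. x i - y i) \<in> spanL W n"
  unfolding spanL_iff
  by (elim exE, rule exI[of _ "\<lambda>k. _ k - _ k"]) (simp add: matrix_diff_rdistrib sum_subtractf)

lemma spanR_scale: "x \<in> spanR V n \<Longrightarrow> (\<lambda>i. x i ** c) \<in> spanR V n"
  unfolding spanR_iff
  by (elim exE, rule exI[of _ "\<lambda>k. _ k ** c"]) (simp add: matrix_sum_rdistrib matrix_mul_assoc)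

lemma spanL_scale: "x \<in> spanL W n \<Longrightarrow> (\<lambda>i. c ** x i) \<in> spanL W n"
  unfolding spanL_iff
  by (elim exE, rule exI[of _ "\<lambda>k. c ** _ k"]) (simp add: matrix_sum_ldistrib matrix_mul_assoc)

lemma spanR_generator: "k \<in> {1..n} \<Longrightarrow> V k \<in> spanR V n"
  unfolding spanR_iff
  by (rule exI[of _ "\<lambda>j. if j = k then mat 1 else 0"])
     (simp add: if_distrib[of "\<lambda>M. _ ** M"] cong: if_cong)

lemma spanL_generator: "k \<in> {1..n} \<Longrightarrow> W k \<in> spanL W n"
  unfolding spanL_iff
  by (rule exI[of _ "\<lambda>j. if j = k then mat 1 else 0"])
     (simp add: if_distrib[of "\<lambda>M. M ** _"] cong: if_cong)

lemma spanR_mono: "n \<le> m \<Longrightarrow> x \<in> spanR V n \<Longrightarrow> x \<in> spanR V m"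
  unfolding spanR_iff
proof (elim exE)
  fix \<eta> assume "n \<le> m" and "x = (\<lambda>i. \<Sum>k\<in>{1..n}. V k i ** \<eta> k)"
  then show "\<exists>\<eta>. x = (\<lambda>i. \<Sum>k\<in>{1..m}. V k i ** \<eta> k)"
    by (intro exI[of _ "\<lambda>k. if k \<le> n then \<eta> k else 0"]) (auto intro!: sum.mono_neutral_cong_left)
qed

lemma spanL_mono: "n \<le> m \<Longrightarrow> x \<in> spanL W n \<Longrightarrow> x \<in> spanL W m"
  unfolding spanL_iff
proof (elim exE)
  fix \<eta> assume "n \<le> m" and "x = (\<lambda>i. \<Sum>k\<in>{1..n}. \<eta> k ** W k i)"
  then show "\<exists>\<eta>. x = (\<lambda>i. \<Sum>k\<in>{1..m}. \<eta> k ** W k i)"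
    by (intro exI[of _ "\<lambda>k. if k \<le> n then \<eta> k else 0"]) (auto intro!: sum.mono_neutral_cong_left)
qed

lemma spanR_trans:
  assumes "\<forall>k\<in>{1..n}. U k \<in> spanR V m" and "x \<in> spanR U n"
  shows "x \<in> spanR V m"
proof -
  obtain \<eta> where x: "x = (\<lambda>i. \<Sum>k\<in>{1..n}. U k i ** \<eta> k)"
    using assms(2) spanR_iff by blast
  have "(\<lambda>i. \<Sum>k\<in>S. U k i ** \<eta> k) \<in> spanR V m" if "finite S" "S \<subseteq> {1..n}" for S
    using that
  proof (induction S rule: finite_induct)
    case (insert a F)
    then have "(\<lambda>i. U a i ** \<eta> a) \<in> spanR V m"
      using assms(1) by (intro spanR_scale) auto
    with insert show ?case
      by (simp add: spanR_add)
  qed (simp add: spanR_zero)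
  then show ?thesis
    using x by simp
qed

lemma spanL_trans:
  assumes "\<forall>k\<in>{1..n}. U k \<in> spanL W m" and "x \<in> spanL U n"
  shows "x \<in> spanL W m"
proof -
  obtain \<eta> where x: "x = (\<lambda>i. \<Sum>k\<in>{1..n}. \<eta> k ** U k i)"
    using assms(2) spanL_iff by blast
  have "(\<lambda>i. \<Sum>k\<in>S. \<eta> k ** U k i) \<in> spanL W m" if "finite S" "S \<subseteq> {1..n}" for S
    using that
  proof (induction S rule: finite_induct)
    case (insert a F)
    then have "(\<lambda>i. \<eta> a ** U a i) \<in> spanL W m"
      using assms(1) by (intro spanL_scale) auto
    with insert show ?case
      by (simp add: spanL_add)
  qed (simp add: spanL_zero)
  then show ?thesis
    using x by simp
qed

lemma tvec_in_spanR: "x \<in> spanR U n \<Longrightarrow> tvec A x \<in> spanR (\<lambda>k. tvec A (U k)) n"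
  unfolding spanR_iff tvec_def
  by (elim exE, rule exI)
     (simp add: matrix_sum_ldistrib matrix_sum_rdistrib matrix_mul_assoc, rule ext, rule sum.swap)

lemma dvec_in_spanL: "x \<in> spanL U n \<Longrightarrow> dvec x A \<in> spanL (\<lambda>k. dvec (U k) A) n"
  unfolding spanL_iff dvec_def
  by (elim exE, rule exI)
     (simp add: matrix_sum_ldistrib matrix_sum_rdistrib matrix_mul_assoc, rule ext, rule sum.swap)

lemma spanR_cong: "(\<And>k. k \<in> {1..n} \<Longrightarrow> U k = V k) \<Longrightarrow> spanR U n = spanR V n"
  unfolding spanR_def by (metis (no_types, lifting) sum.cong)

lemma spanL_cong: "(\<And>k. k \<in> {1..n} \<Longrightarrow> U k = W k) \<Longrightarrow> spanL U n = spanL W n"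
  unfolding spanL_def by (metis (no_types, lifting) sum.cong)

lemma spanR_eqI:
  "\<forall>k\<in>{1..n}. U k \<in> spanR V n \<Longrightarrow> \<forall>k\<in>{1..n}. V k \<in> spanR U n \<Longrightarrow> spanR U n = spanR V n"
  using spanR_trans by blast

lemma spanL_eqI:
  "\<forall>k\<in>{1..n}. U k \<in> spanL W n \<Longrightarrow> \<forall>k\<in>{1..n}. W k \<in> spanL U n \<Longrightarrow> spanL U n = spanL W n"
  using spanL_trans by blast

lemma tvec_kronI_scale:
  "tvec (\<lambda>i1 i2. P i1 i2 ** c) (kronI a) = (\<lambda>i. tvec P (kronI a) i ** c)"
  by (rule ext) (simp add: tvec_def kronI_def matrix_sum_rdistrib matrix_mul_assoc[symmetric] mat_matrix_mult_commute)

lemma dvec_kronI_sum_scale: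
  "dvec (kronI b) (\<lambda>i1 i2. \<Sum>k\<in>S. c k ** P k i1 i2) = (\<lambda>i. \<Sum>k\<in>S. c k ** dvec (kronI b) (P k) i)"
proof (rule ext)
  fix i
  have "dvec (kronI b) (\<lambda>i1 i2. \<Sum>k\<in>S. c k ** P k i1 i2) i
      = (\<Sum>l\<in>UNIV. \<Sum>k\<in>S. c k ** (mat (b $ l) ** P k l i))"
    unfolding dvec_def kronI_def by (simp add: matrix_sum_ldistrib mat_matrix_mult_left_commute)
  also have "\<dots> = (\<Sum>k\<in>S. c k ** dvec (kronI b) (P k) i)"
    by (subst sum.swap) (simp add: dvec_def kronI_def matrix_sum_ldistrib)
  finally show "dvec (kronI b) (\<lambda>i1 i2. \<Sum>k\<in>S. c k ** P k i1 i2) i = \<dots>" .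
qed

lemma setcompr_eq_reparam:
  "(\<And>x. f x = g (p x)) \<Longrightarrow> (\<And>y. g y = f (q y)) \<Longrightarrow> {f x | x. True} = {g y | y. True}"
  by blast

lemma krylov_kronI_eq_spanR:
  "krylov A (kronI a) n = spanR (\<lambda>k. tvec (tpow A (k - 1)) (kronI a)) n"
  unfolding krylov_def spanR_def
  by (rule setcompr_eq_reparam[where p = "\<lambda>\<eta> k. \<eta> (k - 1)" and q = "\<lambda>\<eta> k. \<eta> (Suc k)"])
     (simp_all add: tvec_kronI_scale sum.atLeast1_atMost_eq)

lemma krylovD_kronI_eq_spanL:
  "krylovD (kronI b) A n = spanL (\<lambda>k. dvec (kronI b) (tpow A (k - 1))) n"
  unfolding krylovD_def spanL_def
  by (rule setcompr_eq_reparam[where p = "\<lambda>\<eta> k. mH (\<eta> (k - 1))" and q = "\<lambda>\<eta> k. mH (\<eta> (Suc k))"])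
     (simp_all add: dvec_kronI_sum_scale sum.atLeast1_atMost_eq mH_def vec_eq_iff)

section \<open>The Lanczos recurrences\<close>

locale tensor_lanczos =
  fixes A :: "'N::finite \<Rightarrow> 'N \<Rightarrow> complex^'m^'m"
    and v w :: "complex^'N"
    and \<gamma> :: "nat \<Rightarrow> complex^'m^'m"
begin

text \<open>By truncated subtraction \<open>lzV A v w \<gamma> 0\<close> is \<open>V\<^sub>1\<close>, not \<open>V\<^sub>0 = 0\<close>; \<open>V\<close> and \<open>W\<close>
  below repair this at index 0.\<close>

definition V :: "nat \<Rightarrow> 'N \<Rightarrow> complex^'m^'m" where
  "V k = (if k = 0 then (\<lambda>_. 0) else lzV A v w \<gamma> k)"

definition W :: "nat \<Rightarrow> 'N \<Rightarrow> complex^'m^'m" where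
  "W k = (if k = 0 then (\<lambda>_. 0) else lzW A v w \<gamma> k)"

abbreviation \<alpha> where "\<alpha> k \<equiv> lzalpha A v w \<gamma> k"
abbreviation \<beta> where "\<beta> k \<equiv> lzbeta A v w \<gamma> k"

text \<open>\<open>Vhat m\<close> and \<open>What m\<close> are the unnormalised vectors of step \<open>m + 2\<close>.\<close>

definition Vhat :: "nat \<Rightarrow> 'N \<Rightarrow> complex^'m^'m" where
  "Vhat m = (\<lambda>i. tvec A (V (Suc m)) i - V (Suc m) i ** \<alpha> (Suc m) - V m i ** \<gamma> (Suc m))"

definition What :: "nat \<Rightarrow> 'N \<Rightarrow> complex^'m^'m" where
  "What m = (\<lambda>i. dvec (W (Suc m)) A i - \<alpha> (Suc m) ** W (Suc m) i - \<beta> (Suc m) ** W m i)"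

lemma lanczos_state_eq:
  "lanczos_state A v w \<gamma> m = (V m, V (Suc m), W m, W (Suc m), \<beta> (Suc m))"
proof (cases m)
  case (Suc k)
  then show ?thesis
    by (cases "lanczos_state A v w \<gamma> k") (simp add: V_def W_def lzV_def lzW_def lzbeta_def Let_def)
qed (simp add: V_def W_def lzV_def lzW_def lzbeta_def)

lemma lanczos_state_Suc:
  "lanczos_state A v w \<gamma> (Suc m) =
    (V (Suc m), (\<lambda>i. Vhat m i ** matrix_inv (matrix_inv (\<gamma> (Suc (Suc m))) ** hinner (What m) (Vhat m))),
     W (Suc m), (\<lambda>i. matrix_inv (\<gamma> (Suc (Suc m))) ** What m i),
     matrix_inv (\<gamma> (Suc (Suc m))) ** hinner (What m) (Vhat m))"
  by (simp add: lanczos_state_eq[of m] Let_def Vhat_def What_def lzalpha_def V_def W_def)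

lemma beta_Suc_Suc: "\<beta> (Suc (Suc m)) = matrix_inv (\<gamma> (Suc (Suc m))) ** hinner (What m) (Vhat m)"
  by (simp only: lzbeta_def diff_Suc_1 lanczos_state_Suc) simp

lemma V_Suc_Suc: "V (Suc (Suc m)) = (\<lambda>i. Vhat m i ** matrix_inv (\<beta> (Suc (Suc m))))"
  unfolding beta_Suc_Suc by (simp only: V_def lzV_def diff_Suc_1 lanczos_state_Suc) simp

lemma W_Suc_Suc: "W (Suc (Suc m)) = (\<lambda>i. matrix_inv (\<gamma> (Suc (Suc m))) ** What m i)"
  by (simp only: W_def lzW_def diff_Suc_1 lanczos_state_Suc) simp

lemma V_0: "V 0 = (\<lambda>_. 0)"
  by (simp add: V_def)

lemma W_0: "W 0 = (\<lambda>_. 0)"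
  by (simp add: W_def)

lemma V_1: "V (Suc 0) = kronI v"
  by (simp add: V_def lzV_def)

lemma W_1: "W (Suc 0) = kronI (\<chi> i. cnj (w $ i))"
  by (simp add: W_def lzW_def)

lemma hinner_W_A_V_diag: "hinner (W (Suc m)) (tvec A (V (Suc m))) = \<alpha> (Suc m)"
  by (simp add: lzalpha_def V_def W_def)

lemma dvec_W_recurrence:
  assumes "invertible (\<gamma> (Suc (Suc m)))"
  shows "dvec (W (Suc m)) A
    = (\<lambda>i. \<gamma> (Suc (Suc m)) ** W (Suc (Suc m)) i + \<alpha> (Suc m) ** W (Suc m) i + \<beta> (Suc m) ** W m i)"
proof -
  have "\<gamma> (Suc (Suc m)) ** W (Suc (Suc m)) i = What m i" for i
    by (simp add: W_Suc_Suc matrix_mul_assoc matrix_inv_right[OF assms])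
  then show ?thesis
    by (simp add: What_def)
qed

lemma tvec_V_recurrence:
  assumes "invertible (\<beta> (Suc (Suc m)))"
  shows "tvec A (V (Suc m))
    = (\<lambda>i. V (Suc (Suc m)) i ** \<beta> (Suc (Suc m)) + V (Suc m) i ** \<alpha> (Suc m) + V m i ** \<gamma> (Suc m))"
proof -
  have "V (Suc (Suc m)) i ** \<beta> (Suc (Suc m)) = Vhat m i" for i
    by (simp add: V_Suc_Suc matrix_mul_assoc[symmetric] matrix_inv_left[OF assms])
  then show ?thesis
    by (simp add: Vhat_def)
qed

text \<open>This is what the choice of \<open>\<beta>\<close> is made for.\<close>

lemma hinner_W_V_Suc_Suc:
  assumes "invertible (\<beta> (Suc (Suc m)))"
  shows "hinner (W (Suc (Suc m))) (V (Suc (Suc m))) = mat 1"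
proof -
  have "hinner (W (Suc (Suc m))) (V (Suc (Suc m)))
      = (matrix_inv (\<gamma> (Suc (Suc m))) ** hinner (What m) (Vhat m)) ** matrix_inv (\<beta> (Suc (Suc m)))"
    by (simp add: W_Suc_Suc V_Suc_Suc hinner_scale_left hinner_scale_right matrix_mul_assoc)
  also have "\<dots> = mat 1"
    by (simp add: beta_Suc_Suc[symmetric] matrix_inv_right[OF assms])
  finally show ?thesis .
qed

definition K :: "nat \<Rightarrow> 'N \<Rightarrow> complex^'m^'m" where
  "K k = tvec (tpow A (k - 1)) (kronI v)"

definition KD :: "nat \<Rightarrow> 'N \<Rightarrow> complex^'m^'m" where
  "KD k = dvec (kronI (\<chi> i. cnj (w $ i))) (tpow A (k - 1))"

lemma K_1: "K (Suc 0) = V (Suc 0)"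
  by (simp add: K_def V_1 tpow_0 tvec_tid)

lemma KD_1: "KD (Suc 0) = W (Suc 0)"
  by (simp add: KD_def W_1 tpow_0 dvec_tid)

lemma tvec_K: "tvec A (K (Suc k)) = K (Suc (Suc k))"
  by (simp add: K_def tvec_tvec tpow_Suc)

lemma dvec_KD: "dvec (KD (Suc k)) A = KD (Suc (Suc k))"
  by (simp add: KD_def dvec_dvec tpow_Suc_right)

lemma tvec_spanR_K:
  assumes "x \<in> spanR K k"
  shows "tvec A x \<in> spanR K (Suc k)"
proof -
  have "tvec A (K j) \<in> spanR K (Suc k)" if "j \<in> {1..k}" for j
    using that by (cases j) (auto simp: tvec_K intro: spanR_generator)
  then show ?thesis
    by (intro spanR_trans[OF _ tvec_in_spanR[OF assms]] ballI)
qed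

lemma dvec_spanL_KD:
  assumes "x \<in> spanL KD k"
  shows "dvec x A \<in> spanL KD (Suc k)"
proof -
  have "dvec (KD j) A \<in> spanL KD (Suc k)" if "j \<in> {1..k}" for j
    using that by (cases j) (auto simp: dvec_KD intro: spanL_generator)
  then show ?thesis
    by (intro spanL_trans[OF _ dvec_in_spanL[OF assms]] ballI)
qed

lemma V_in_spanR_K: "V k \<in> spanR K k"
proof (induction k rule: induct_nat_012)
  case 0
  then show ?case by (simp add: V_0 spanR_zero)
next
  case 1
  then show ?case by (simp add: K_1[symmetric] spanR_generator)
next
  case (ge2 m)
  have "Vhat m \<in> spanR K (Suc (Suc m))"
    unfolding Vhat_def
    by (intro spanR_diff spanR_scale tvec_spanR_K ge2.IH spanR_mono[OF _ ge2.IH(1)]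
          spanR_mono[OF _ ge2.IH(2)]) auto
  then show ?case
    unfolding V_Suc_Suc by (rule spanR_scale)
qed

lemma W_in_spanL_KD: "W k \<in> spanL KD k"
proof (induction k rule: induct_nat_012)
  case 0
  then show ?case by (simp add: W_0 spanL_zero)
next
  case 1
  then show ?case by (simp add: KD_1[symmetric] spanL_generator)
next
  case (ge2 m)
  have "What m \<in> spanL KD (Suc (Suc m))"
    unfolding What_def
    by (intro spanL_diff spanL_scale dvec_spanL_KD ge2.IH spanL_mono[OF _ ge2.IH(1)]
          spanL_mono[OF _ ge2.IH(2)]) auto
  then show ?case
    unfolding W_Suc_Suc by (rule spanL_scale)
qed

lemma V_in_spanR_V: "j \<le> k \<Longrightarrow> V j \<in> spanR V k"
  by (cases j) (auto simp: V_0 spanR_zero intro!: spanR_generator)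

lemma W_in_spanL_W: "j \<le> k \<Longrightarrow> W j \<in> spanL W k"
  by (cases j) (auto simp: W_0 spanL_zero intro!: spanL_generator)

end

section \<open>Biorthogonality\<close>

locale tensor_lanczos_regular = tensor_lanczos A v w \<gamma>
  for A :: "'N::finite \<Rightarrow> 'N \<Rightarrow> complex^'m^'m"
    and v w :: "complex^'N"
    and \<gamma> :: "nat \<Rightarrow> complex^'m^'m" +
  fixes n :: nat
  assumes w_v: "(\<Sum>i\<in>UNIV. cnj (w $ i) * v $ i) = 1"
    and gamma_invertible: "\<forall>k\<ge>2. invertible (\<gamma> k)"
    and beta_invertible: "\<forall>k\<in>{2..n}. invertible (lzbeta A v w \<gamma> k)"
begin

definition biorthogonal_upto :: "nat \<Rightarrow> bool" where
  "biorthogonal_upto p \<longleftrightarrow>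
    (\<forall>j\<le>p. \<forall>k\<le>p. hinner (W k) (V j) = (if k = j \<and> j \<noteq> 0 then mat 1 else 0))"

lemma biorthogonal_upto_1: "biorthogonal_upto (Suc 0)"
proof -
  have "hinner (W (Suc 0)) (V (Suc 0)) = mat 1"
    by (simp add: W_1 V_1 kronI_def hinner_def mat_mult_mat sum_mat w_v)
  then show ?thesis
    by (auto simp: biorthogonal_upto_def le_Suc_eq V_0 W_0 hinner_zero_left hinner_zero_right)
qed

lemma hinner_W_Suc_Suc_V:
  assumes "Suc (Suc m) \<le> n" and "biorthogonal_upto (Suc m)" and "j \<le> Suc m"
  shows "hinner (W (Suc (Suc m))) (V j) = 0"
proof -
  have bio: "\<And>j k. j \<le> Suc m \<Longrightarrow> k \<le> Suc m \<Longrightarrow> hinner (W k) (V j) = (if k = j \<and> j \<noteq> 0 then mat 1 else 0)"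
    using assms(2) by (simp add: biorthogonal_upto_def)
  have What_V: "hinner (What m) (V j) = hinner (W (Suc m)) (tvec A (V j))
      - \<alpha> (Suc m) ** hinner (W (Suc m)) (V j) - \<beta> (Suc m) ** hinner (W m) (V j)" for j
    by (simp add: What_def hinner_diff_left hinner_scale_left hinner_dvec)
  have "hinner (What m) (V j) = 0"
  proof (cases j)
    case 0
    then show ?thesis by (simp add: What_V V_0 tvec_zero hinner_zero_right)
  next
    case (Suc l)
    show ?thesis
    proof (cases "l = m")
      case True
      then show ?thesis unfolding What_V using Suc by (simp add: hinner_W_A_V_diag bio)
    next
      case False
      then have "l < m" using Suc assms(3) by auto
      moreover have inv: "invertible (\<beta> (Suc (Suc l)))"
        using beta_invertible \<open>l < m\<close> assms(1) by auto
      ultimately show ?thesis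
        unfolding What_V Suc tvec_V_recurrence[OF inv]
        by (cases "m = Suc l") (simp_all add: hinner_add_right hinner_scale_right bio)
    qed
  qed
  then show ?thesis by (simp add: W_Suc_Suc hinner_scale_left)
qed

lemma hinner_W_V_Suc_Suc_off_diag:
  assumes "biorthogonal_upto (Suc m)" and "k \<le> Suc m"
  shows "hinner (W k) (V (Suc (Suc m))) = 0"
proof -
  have bio: "\<And>j k. j \<le> Suc m \<Longrightarrow> k \<le> Suc m \<Longrightarrow> hinner (W k) (V j) = (if k = j \<and> j \<noteq> 0 then mat 1 else 0)"
    using assms(1) by (simp add: biorthogonal_upto_def)
  have W_Vhat: "hinner (W k) (Vhat m) = hinner (W k) (tvec A (V (Suc m)))
      - hinner (W k) (V (Suc m)) ** \<alpha> (Suc m) - hinner (W k) (V m) ** \<gamma> (Suc m)" for k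
    by (simp add: Vhat_def hinner_diff_right hinner_scale_right)
  have "hinner (W k) (Vhat m) = 0"
  proof (cases k)
    case 0
    then show ?thesis by (simp add: W_Vhat W_0 hinner_zero_left)
  next
    case (Suc l)
    show ?thesis
    proof (cases "l = m")
      case True
      then show ?thesis unfolding W_Vhat using Suc by (simp add: hinner_W_A_V_diag bio)
    next
      case False
      then have "l < m" using Suc assms(2) by auto
      moreover have inv: "invertible (\<gamma> (Suc (Suc l)))"
        using gamma_invertible by auto
      ultimately show ?thesis
        unfolding W_Vhat Suc hinner_dvec[symmetric] dvec_W_recurrence[OF inv]
        by (cases "m = Suc l") (simp_all add: hinner_add_left hinner_scale_left bio)
    qed
  qed
  then show ?thesis by (simp add: V_Suc_Suc hinner_scale_right)
qed

lemma biorthogonal_upto_Suc_Suc: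
  assumes "Suc (Suc m) \<le> n" and "biorthogonal_upto (Suc m)"
  shows "biorthogonal_upto (Suc (Suc m))"
proof -
  have "invertible (\<beta> (Suc (Suc m)))"
    using beta_invertible assms(1) by auto
  then show ?thesis
    using assms hinner_W_Suc_Suc_V hinner_W_V_Suc_Suc_off_diag hinner_W_V_Suc_Suc
    unfolding biorthogonal_upto_def[of "Suc (Suc m)"]
    by (auto simp: le_Suc_eq biorthogonal_upto_def)
qed

lemma biorthogonal_upto_n: "p \<le> n \<Longrightarrow> biorthogonal_upto p"
proof (induction p rule: induct_nat_012)
  case 0
  then show ?case by (simp add: biorthogonal_upto_def W_0 hinner_zero_left)
next
  case 1
  show ?case by (rule biorthogonal_upto_1)
next
  case (ge2 m)
  then show ?case by (simp add: biorthogonal_upto_Suc_Suc)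
qed

lemma hinner_W_V: "j \<le> n \<Longrightarrow> k \<le> n \<Longrightarrow> hinner (W k) (V j) = (if k = j \<and> j \<noteq> 0 then mat 1 else 0)"
  using biorthogonal_upto_n[OF order_refl] by (simp add: biorthogonal_upto_def)

section \<open>Krylov spaces and the tridiagonal projection\<close>

lemma tvec_V_in_spanR_V:
  assumes "j < n"
  shows "tvec A (V j) \<in> spanR V (Suc j)"
proof (cases j)
  case 0
  then show ?thesis by (simp add: V_0 tvec_zero spanR_zero)
next
  case (Suc l)
  have inv: "invertible (\<beta> (Suc (Suc l)))"
    using beta_invertible assms Suc by auto
  show ?thesis
    unfolding Suc tvec_V_recurrence[OF inv]
    by (intro spanR_add spanR_scale V_in_spanR_V) auto
qed

lemma dvec_W_in_spanL_W: "dvec (W j) A \<in> spanL W (Suc j)"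
proof (cases j)
  case 0
  then show ?thesis by (simp add: W_0 dvec_zero spanL_zero)
next
  case (Suc l)
  have inv: "invertible (\<gamma> (Suc (Suc l)))"
    using gamma_invertible by auto
  show ?thesis
    unfolding Suc dvec_W_recurrence[OF inv]
    by (intro spanL_add spanL_scale W_in_spanL_W) auto
qed

lemma K_in_spanR_V: "Suc k \<le> n \<Longrightarrow> K (Suc k) \<in> spanR V (Suc k)"
proof (induction k)
  case 0
  then show ?case by (simp add: K_1 V_in_spanR_V)
next
  case (Suc k)
  have "tvec A (V j) \<in> spanR V (Suc (Suc k))" if "j \<in> {1..Suc k}" for j
    using that Suc.prems by (intro spanR_mono[OF _ tvec_V_in_spanR_V]) auto
  moreover have "K (Suc k) \<in> spanR V (Suc k)"
    using Suc by simp
  ultimately show ?case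
    unfolding tvec_K[symmetric] using spanR_trans[OF _ tvec_in_spanR] by blast
qed

lemma KD_in_spanL_W: "KD (Suc k) \<in> spanL W (Suc k)"
proof (induction k)
  case 0
  then show ?case by (simp add: KD_1 W_in_spanL_W)
next
  case (Suc k)
  have "dvec (W j) A \<in> spanL W (Suc (Suc k))" if "j \<in> {1..Suc k}" for j
    using that by (intro spanL_mono[OF _ dvec_W_in_spanL_W]) auto
  then show ?case
    unfolding dvec_KD[symmetric] using spanL_trans[OF _ dvec_in_spanL[OF Suc.IH]] by blast
qed

lemma spanR_lzV_eq_krylov: "spanR (lzV A v w \<gamma>) n = krylov A (kronI v) n"
proof -
  have "spanR (lzV A v w \<gamma>) n = spanR V n"
    by (rule spanR_cong) (simp add: V_def)
  also have "\<dots> = spanR K n"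
  proof (rule spanR_eqI)
    show "\<forall>k\<in>{1..n}. V k \<in> spanR K n"
      using spanR_mono[OF _ V_in_spanR_K] by auto
    show "\<forall>k\<in>{1..n}. K k \<in> spanR V n"
    proof
      fix k assume k: "k \<in> {1..n}"
      then obtain l where "k = Suc l" by (cases k) auto
      with k show "K k \<in> spanR V n"
        using spanR_mono[OF _ K_in_spanR_V[of l]] by auto
    qed
  qed
  also have "\<dots> = krylov A (kronI v) n"
    by (simp add: krylov_kronI_eq_spanR K_def[abs_def])
  finally show ?thesis .
qed

lemma spanL_lzW_eq_krylovD: "spanL (lzW A v w \<gamma>) n = krylovD (kronI (\<chi> i. cnj (w $ i))) A n"
proof -
  have "spanL (lzW A v w \<gamma>) n = spanL W n"
    by (rule spanL_cong) (simp add: W_def)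
  also have "\<dots> = spanL KD n"
  proof (rule spanL_eqI)
    show "\<forall>k\<in>{1..n}. W k \<in> spanL KD n"
      using spanL_mono[OF _ W_in_spanL_KD] by auto
    show "\<forall>k\<in>{1..n}. KD k \<in> spanL W n"
    proof
      fix k assume k: "k \<in> {1..n}"
      then obtain l where "k = Suc l" by (cases k) auto
      with k show "KD k \<in> spanL W n"
        using spanL_mono[OF _ KD_in_spanL_W[of l]] by auto
    qed
  qed
  also have "\<dots> = krylovD (kronI (\<chi> i. cnj (w $ i))) A n"
    by (simp add: krylovD_kronI_eq_spanL KD_def[abs_def])
  finally show ?thesis .
qed

lemma hinner_W_A_V_eq_triT:
  assumes i: "i \<in> {1..n}" and j: "j \<in> {1..n}"
  shows "hinner (W i) (tvec A (V j)) = triT A v w \<gamma> n i j"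
proof -
  obtain a where a: "i = Suc a" using i by (cases i) auto
  obtain b where b: "j = Suc b" using j by (cases j) auto
  consider "i = j" | "i < j" | "j < i" by linarith
  then show ?thesis
  proof cases
    case 1
    then show ?thesis
      using i a hinner_W_A_V_diag[of a] by (simp add: triT_def)
  next
    case 2
    have inv: "invertible (\<gamma> (Suc (Suc a)))"
      using gamma_invertible by auto
    have "hinner (W i) (tvec A (V j)) = \<gamma> (Suc (Suc a)) ** hinner (W (Suc (Suc a))) (V j)
        + \<alpha> (Suc a) ** hinner (W (Suc a)) (V j) + \<beta> (Suc a) ** hinner (W a) (V j)"
      unfolding a hinner_dvec[symmetric] dvec_W_recurrence[OF inv]
      by (simp add: hinner_add_left hinner_scale_left)
    then show ?thesis
      using 2 i j a b by (simp add: triT_def hinner_W_V)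
  next
    case 3
    have inv: "invertible (\<beta> (Suc (Suc b)))"
      using beta_invertible 3 a b i by auto
    have "hinner (W i) (tvec A (V j)) = hinner (W i) (V (Suc (Suc b))) ** \<beta> (Suc (Suc b))
        + hinner (W i) (V (Suc b)) ** \<alpha> (Suc b) + hinner (W i) (V b) ** \<gamma> (Suc b)"
      unfolding b tvec_V_recurrence[OF inv]
      by (simp add: hinner_add_right hinner_scale_right)
    then show ?thesis
      using 3 i j a b by (simp add: triT_def hinner_W_V)
  qed
qed

lemma tmul_basisW_basisV:
  "i \<in> {1..n} \<Longrightarrow> j \<in> {1..n} \<Longrightarrow>
    tmul (basisW A v w \<gamma> n) (basisV A v w \<gamma> n) i j = hinner (W i) (V j)"
  by (simp add: tmul_def basisW_def basisV_def hinner_def V_def W_def)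

lemma tmul_basisW_A_basisV:
  "i \<in> {1..n} \<Longrightarrow> j \<in> {1..n} \<Longrightarrow>
    tmul (tmul (basisW A v w \<gamma> n) A) (basisV A v w \<gamma> n) i j = hinner (W i) (tvec A (V j))"
  by (simp add: tmul_assoc) (simp add: tmul_def basisW_def basisV_def hinner_def tvec_def V_def W_def)

end

theorem mainTheorem2:
  fixes A :: "'N::finite \<Rightarrow> 'N \<Rightarrow> complex^'m^'m"
    and v w :: "complex^'N"
    and \<gamma> :: "nat \<Rightarrow> complex^'m^'m"
    and n :: nat
  assumes wv: "(\<Sum>i\<in>UNIV. cnj (w $ i) * v $ i) = 1"
    and gam: "\<forall>k\<ge>2. invertible (\<gamma> k)"
    and n1: "n \<ge> 1"
    and bet: "\<forall>k\<in>{2..n}. invertible (lzbeta A v w \<gamma> k)"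
  shows "(\<forall>j\<in>{1..n}. \<forall>k\<in>{1..n}.
            hinner (lzW A v w \<gamma> k) (lzV A v w \<gamma> j) = (if k = j then mat 1 else 0))
       \<and> (\<forall>i\<in>{1..n}. \<forall>j\<in>{1..n}.
            tmul (basisW A v w \<gamma> n) (basisV A v w \<gamma> n) i j = tid i j)
       \<and> spanR (lzV A v w \<gamma>) n = krylov A (kronI v) n
       \<and> spanL (lzW A v w \<gamma>) n = krylovD (kronI (\<chi> i. cnj (w $ i))) A n
       \<and> (\<forall>i\<in>{1..n}. \<forall>j\<in>{1..n}.
            tmul (tmul (basisW A v w \<gamma> n) A) (basisV A v w \<gamma> n) i j = triT A v w \<gamma> n i j)"
proof -
  interpret tensor_lanczos_regular A v w \<gamma> n
    using wv gam bet by unfold_locales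
  have "hinner (lzW A v w \<gamma> k) (lzV A v w \<gamma> j) = (if k = j then mat 1 else 0)"
    if "j \<in> {1..n}" "k \<in> {1..n}" for j k
    using that hinner_W_V[of j k] by (simp add: V_def W_def)
  moreover have "tmul (basisW A v w \<gamma> n) (basisV A v w \<gamma> n) i j = tid i j"
    if "i \<in> {1..n}" "j \<in> {1..n}" for i j
    using that hinner_W_V[of j i] by (simp add: tmul_basisW_basisV tid_def)
  moreover have "tmul (tmul (basisW A v w \<gamma> n) A) (basisV A v w \<gamma> n) i j = triT A v w \<gamma> n i j"
    if "i \<in> {1..n}" "j \<in> {1..n}" for i j
    using that by (simp add: tmul_basisW_A_basisV hinner_W_A_V_eq_triT)
  ultimately show ?thesis
    using spanR_lzV_eq_krylov spanL_lzW_eq_krylovD by blast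
qed

end
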